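(* Let $d\in\mathbb{N}$ and, for $(a,b)\in\mathbb{R}^2$, let $H_{(a,b,d)}$ denote the polynomial system $h_1(x,y)=x^{2d}+ay^d-y=0$, $h_2(x,y)=y^{2d}+bx^d-x=0$. Let $E_d\subseteq\mathbb{R}^2$ be the set of all $(a,b)$ such that $H_{(a,b,d)}$ has at least $5$ non-degenerate isolated roots in the open positive quadrant $\mathbb{R}^2_+=\{(x,y): x>0,\ y>0\}$. Then $E_d$ is an open subset of $\mathbb{R}^2$ and is symmetric about the line $\{a=b\}$ (i.e. $(a,b)\in E_d$ if and only if $(b,a)\in E_d$).
   Context: A root $z$ of a polynomial system $F=(f_1,f_2)$ in two variables is non-degenerate if the Jacobian matrix of $F$ at $z$ is invertible. *)

theory Defs
  imports "HOL-Analysis.Analysis"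
begin

definition H_sys :: "real \<Rightarrow> real \<Rightarrow> nat \<Rightarrow> real \<times> real \<Rightarrow> real \<times> real" where
  "H_sys a b d = (\<lambda>(x, y). (x ^ (2 * d) + a * y ^ d - y, y ^ (2 * d) + b * x ^ d - x))"

definition nondegenerate_root :: "(real \<times> real \<Rightarrow> real \<times> real) \<Rightarrow> real \<times> real \<Rightarrow> bool" where
  "nondegenerate_root F z \<longleftrightarrow> F z = 0 \<and> (\<exists>F'. (F has_derivative F') (at z) \<and> bij F')"

definition isolated_root :: "(real \<times> real \<Rightarrow> real \<times> real) \<Rightarrow> real \<times> real \<Rightarrow> bool" where
  "isolated_root F z \<longleftrightarrow> F z = 0 \<and> (\<exists>e>0. \<forall>w. w \<noteq> z \<and> dist w z < e \<longrightarrow> F w \<noteq> 0)"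

definition pos_quadrant :: "(real \<times> real) set" where
  "pos_quadrant = {(x, y). x > 0 \<and> y > 0}"

definition E_set :: "nat \<Rightarrow> (real \<times> real) set" where
  "E_set d = {(a, b). \<exists>S. finite S \<and> card S \<ge> 5 \<and> S \<subseteq> pos_quadrant \<and>
      (\<forall>z\<in>S. nondegenerate_root (H_sys a b d) z \<and> isolated_root (H_sys a b d) z)}"

end

theory Submission
  imports Defs
begin

(* Nondegenerate roots are isolated, because an injective derivative bounds the growth of
   the function from below.  For the system H the Jacobian determinant is a polynomial in
   (a, b, x, y), so nondegeneracy is an open condition.  At a nondegenerate root the map
   (a, b, x, y) \<mapsto> ((a, b), H (a, b, d) (x, y)) has invertible derivative, so by the open
   mapping theorem all nearby parameters have a nondegenerate positive root nearby; near
   five distinct roots these are again distinct, which proves openness.  Swapping x and y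
   turns roots of H (a, b, d) into roots of H (b, a, d) with the same Jacobian determinant. *)

lemma injective_derivative_imp_eventually_neq:
  fixes F :: "'a::euclidean_space \<Rightarrow> 'b::euclidean_space"
  assumes der: "(F has_derivative F') (at z)" and "inj F'"
  shows "\<forall>\<^sub>F w in at z. F w \<noteq> F z"
proof -
  obtain B where "B > 0" and B: "\<And>v. B * norm v \<le> norm (F' v)"
    using linear_inj_bounded_below_pos has_derivative_linear[OF der] \<open>inj F'\<close> by metis
  then obtain r where "r > 0"
    and r: "\<And>w. norm (w - z) < r \<Longrightarrow> norm (F w - F z - F' (w - z)) \<le> B / 2 * norm (w - z)"
    using der unfolding has_derivative_at_alt by (meson half_gt_zero)
  have "F w \<noteq> F z" if "w \<noteq> z" "dist w z < r" for w
  proof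
    assume "F w = F z"
    then have "B * norm (w - z) \<le> B / 2 * norm (w - z)"
      using that r[of w] B[of "w - z"] by (simp add: dist_norm)
    moreover have "B * norm (w - z) > 0"
      using \<open>B > 0\<close> \<open>w \<noteq> z\<close> by simp
    ultimately show False
      by linarith
  qed
  then show ?thesis
    unfolding eventually_at using \<open>r > 0\<close> by blast
qed

lemma nondegenerate_root_imp_isolated_root:
  assumes "nondegenerate_root F z"
  shows "isolated_root F z"
proof -
  obtain F' where "F z = 0" "(F has_derivative F') (at z)" "bij F'"
    using assms unfolding nondegenerate_root_def by blast
  then have "\<forall>\<^sub>F w in at z. F w \<noteq> 0"
    using injective_derivative_imp_eventually_neq bij_is_inj by fastforce
  then show ?thesis
    using \<open>F z = 0\<close> unfolding isolated_root_def eventually_at by auto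
qed

lemma nondegenerate_root_iff_bij_derivative:
  "(F has_derivative F') (at z) \<Longrightarrow> nondegenerate_root F z \<longleftrightarrow> F z = 0 \<and> bij F'"
  unfolding nondegenerate_root_def by (auto dest: has_derivative_unique)

lemma bij_linear_pair_iff_det:
  fixes c11 c12 c21 c22 :: "'a::field"
  shows "bij (\<lambda>(u, v). (c11 * u + c12 * v, c21 * u + c22 * v)) \<longleftrightarrow> c11 * c22 - c12 * c21 \<noteq> 0"
    (is "bij ?L \<longleftrightarrow> ?det \<noteq> 0")
proof
  assume "bij ?L"
  then have inj: "?L v = ?L (0, 0) \<Longrightarrow> v = (0, 0)" for v
    by (meson bij_is_inj injD)
  show "?det \<noteq> 0"
  proof
    assume "?det = 0"
    then have "(c22, - c21) = (0, 0)" "(c12, - c11) = (0, 0)"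
      by (intro inj; simp add: algebra_simps)+
    then have "(1::'a, 0::'a) = (0, 0)"
      by (intro inj) simp
    then show False
      by simp
  qed
next
  assume "?det \<noteq> 0"
  let ?R = "\<lambda>(p, q). ((c22 * p - c12 * q) / ?det, (c11 * q - c21 * p) / ?det)"
  have "?R \<circ> ?L = id" "?L \<circ> ?R = id"
    using \<open>?det \<noteq> 0\<close> by (auto simp: fun_eq_iff diff_divide_distrib[symmetric]
        add_divide_distrib[symmetric] algebra_simps)
      (simp_all flip: right_diff_distrib)
  then show "bij ?L"
    by (rule o_bij)
qed

lemma eventually_zero_near_nondegenerate_zero:
  fixes F :: "'p::euclidean_space \<times> 'x::euclidean_space \<Rightarrow> 'x"
  assumes "open U" "(p0, x0) \<in> U" "continuous_on U F" "F (p0, x0) = 0"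
    and der: "(F has_derivative F') (at (p0, x0))" and inj: "inj (\<lambda>v. F' (0, v))"
  shows "\<forall>\<^sub>F p in nhds p0. \<exists>x. (p, x) \<in> U \<and> F (p, x) = 0"
proof -
  \<comment> \<open>Sussmann's open mapping theorem applied to the graph map of the family\<close>
  define G where "G q = (fst q, F q)" for q
  define G' where "G' q = (fst q, F' q)" for q
  have "linear F'"
    using der by (rule has_derivative_linear)
  have G_der: "(G has_derivative G') (at (p0, x0))"
    unfolding G_def[abs_def] G'_def[abs_def] by (intro derivative_intros der)
  then have "linear G'"
    by (rule has_derivative_linear)
  moreover have "inj G'"
  proof (rule injI)
    fix q r assume eq: "G' q = G' r"
    then have "q - r = (0, snd q - snd r)"
      by (simp add: G'_def prod_eq_iff)
    then have "F' (0, snd q - snd r) = 0"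
      using eq \<open>linear F'\<close> by (metis G'_def linear_diff right_minus_eq snd_conv)
    moreover have "F' (0, 0) = 0"
      using linear_0[OF \<open>linear F'\<close>] by (simp add: zero_prod_def)
    ultimately have "snd q - snd r = 0"
      using injD[OF inj, of "snd q - snd r" 0] by simp
    then have "snd q = snd r"
      by simp
    with eq show "q = r"
      by (simp add: G'_def prod_eq_iff)
  qed
  ultimately have "linear (inv G')" "G' \<circ> inv G' = id"
    by (simp_all add: inj_linear_imp_inv_linear linear_inj_imp_surj flip: surj_iff)
  then have "G (p0, x0) \<in> interior (G ` U)"
    using assms(1-3) G_der
    by (intro sussmann_open_mapping[where g' = "inv G'"])
      (auto simp: G_def[abs_def] interior_open linear_linear intro!: continuous_intros)
  moreover have "((\<lambda>p. (p, 0)) \<longlongrightarrow> G (p0, x0)) (nhds p0)"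
    using \<open>F (p0, x0) = 0\<close> by (simp add: G_def) (intro tendsto_Pair filterlim_ident tendsto_const)
  ultimately have "\<forall>\<^sub>F p in nhds p0. (p, 0) \<in> interior (G ` U)"
    by (intro topological_tendstoD) simp_all
  then have "\<forall>\<^sub>F p in nhds p0. (p, 0) \<in> G ` U"
    by (rule eventually_mono) (use interior_subset in blast)
  then show ?thesis
    by (rule eventually_mono) (auto simp: G_def image_iff prod_eq_iff)
qed

lemma open_Collect_finite_subset_card_ge:
  fixes R :: "'p::topological_space \<Rightarrow> 'x::metric_space set"
  assumes persist: "\<And>p z e. z \<in> R p \<Longrightarrow> e > 0 \<Longrightarrow> \<forall>\<^sub>F q in nhds p. \<exists>x\<in>R q. dist x z < e"
  shows "open {p. \<exists>S. finite S \<and> n \<le> card S \<and> S \<subseteq> R p}"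
proof -
  have eventually_many: "\<forall>\<^sub>F q in nhds p. \<exists>T. finite T \<and> n \<le> card T \<and> T \<subseteq> R q"
    if "\<exists>S. finite S \<and> n \<le> card S \<and> S \<subseteq> R p" for p
  proof -
    obtain S where S: "S \<subseteq> R p" "finite S" "n \<le> card S"
      using \<open>\<exists>S. finite S \<and> n \<le> card S \<and> S \<subseteq> R p\<close> by blast
    have avoid: "\<forall>z\<in>S. \<exists>r>0. \<forall>u\<in>S. u \<noteq> z \<longrightarrow> r \<le> dist z u"
      using finite_set_avoid[OF \<open>finite S\<close>] by blast
    obtain r where r: "\<And>z. z \<in> S \<Longrightarrow> r z > 0"
      and sep: "\<And>z u. z \<in> S \<Longrightarrow> u \<in> S \<Longrightarrow> u \<noteq> z \<Longrightarrow> r z \<le> dist z u"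
      using bchoice[OF avoid] by blast
    \<comment> \<open>the balls of radius r z / 2 are disjoint, so the points chosen in them are distinct\<close>
    have "\<forall>\<^sub>F q in nhds p. \<forall>z\<in>S. \<exists>x\<in>R q. dist x z < r z / 2"
      using S r by (intro eventually_ball_finite ballI persist) auto
    then show ?thesis
    proof (rule eventually_mono)
      fix q assume near: "\<forall>z\<in>S. \<exists>x\<in>R q. dist x z < r z / 2"
      obtain f where f: "\<And>z. z \<in> S \<Longrightarrow> f z \<in> R q \<and> dist (f z) z < r z / 2"
        using near by metis
      have "inj_on f S"
      proof (rule inj_onI, rule ccontr)
        fix u v assume "u \<in> S" "v \<in> S" "f u = f v" "u \<noteq> v"
        then have "dist u v \<le> dist (f u) u + dist (f v) v"
          using dist_triangle3[of u v "f u"] by (simp add: dist_commute)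
        moreover have "dist (f u) u < r u / 2" "dist (f v) v < r v / 2"
          using f \<open>u \<in> S\<close> \<open>v \<in> S\<close> by blast+
        moreover have "r u \<le> dist u v" "r v \<le> dist u v"
          using sep[of u v] sep[of v u] \<open>u \<in> S\<close> \<open>v \<in> S\<close> \<open>u \<noteq> v\<close> by (simp_all add: dist_commute)
        ultimately show False
          by linarith
      qed
      then show "\<exists>T. finite T \<and> n \<le> card T \<and> T \<subseteq> R q"
        using f S by (intro exI[of _ "f ` S"]) (auto simp: card_image)
    qed
  qed
  show ?thesis
    by (rule Topological_Spaces.openI) (use eventually_many in \<open>auto simp: eventually_nhds subset_eq\<close>)
qed

definition H_jacobian :: "nat \<Rightarrow> real \<Rightarrow> real \<Rightarrow> real \<times> real \<Rightarrow> real \<times> real \<Rightarrow> real \<times> real" where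
  "H_jacobian d a b = (\<lambda>(x, y) (u, v).
     (2 * d * x ^ (2 * d - 1) * u + (a * d * y ^ (d - 1) - 1) * v,
      (b * d * x ^ (d - 1) - 1) * u + 2 * d * y ^ (2 * d - 1) * v))"

definition H_jacobian_det :: "nat \<Rightarrow> real \<Rightarrow> real \<Rightarrow> real \<times> real \<Rightarrow> real" where
  "H_jacobian_det d a b = (\<lambda>(x, y).
     2 * d * x ^ (2 * d - 1) * (2 * d * y ^ (2 * d - 1)) - (a * d * y ^ (d - 1) - 1) * (b * d * x ^ (d - 1) - 1))"

lemma H_sys_has_derivative: "(H_sys a b d has_derivative H_jacobian d a b z) (at z)"
proof -
  obtain x y where z: "z = (x, y)" by fastforce
  show ?thesis
    unfolding H_sys_def H_jacobian_def z case_prod_beta'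
    by (rule derivative_eq_intros refl | simp)+ (auto simp: fun_eq_iff algebra_simps)
qed

lemma H_sys_has_joint_derivative:
  "((\<lambda>(p, z). H_sys (fst p) (snd p) d z) has_derivative
     (\<lambda>(u, v). (fst u * snd z ^ d, snd u * fst z ^ d) + H_jacobian d a b z v)) (at ((a, b), z))"
proof -
  obtain x y where z: "z = (x, y)" by fastforce
  show ?thesis
    unfolding H_sys_def H_jacobian_def z case_prod_beta'
    by (rule derivative_eq_intros refl | simp)+ (auto simp: fun_eq_iff algebra_simps)
qed

lemma bij_H_jacobian_iff: "bij (H_jacobian d a b z) \<longleftrightarrow> H_jacobian_det d a b z \<noteq> 0"
  by (cases z) (simp add: H_jacobian_def H_jacobian_det_def bij_linear_pair_iff_det)

lemma nondegenerate_root_H_sys_iff: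
  "nondegenerate_root (H_sys a b d) z \<longleftrightarrow> H_sys a b d z = 0 \<and> H_jacobian_det d a b z \<noteq> 0"
  using nondegenerate_root_iff_bij_derivative[OF H_sys_has_derivative] bij_H_jacobian_iff by blast

definition nondegenerate_positive_roots :: "nat \<Rightarrow> real \<times> real \<Rightarrow> (real \<times> real) set" where
  "nondegenerate_positive_roots d p = {z \<in> pos_quadrant. nondegenerate_root (H_sys (fst p) (snd p) d) z}"

lemma mem_E_set_iff:
  "(a, b) \<in> E_set d \<longleftrightarrow> (\<exists>S. finite S \<and> 5 \<le> card S \<and> S \<subseteq> nondegenerate_positive_roots d (a, b))"
proof -
  have "S \<subseteq> nondegenerate_positive_roots d (a, b) \<longleftrightarrow>
      S \<subseteq> pos_quadrant \<and> (\<forall>z\<in>S. nondegenerate_root (H_sys a b d) z \<and> isolated_root (H_sys a b d) z)"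
    for S
    using nondegenerate_root_imp_isolated_root by (auto simp: nondegenerate_positive_roots_def)
  then show ?thesis
    unfolding E_set_def by simp
qed

lemma E_set_eq: "E_set d = {p. \<exists>S. finite S \<and> 5 \<le> card S \<and> S \<subseteq> nondegenerate_positive_roots d p}"
proof (rule set_eqI)
  fix p :: "real \<times> real"
  show "p \<in> E_set d \<longleftrightarrow> p \<in> {p. \<exists>S. finite S \<and> 5 \<le> card S \<and> S \<subseteq> nondegenerate_positive_roots d p}"
    by (cases p) (simp only: mem_E_set_iff mem_Collect_eq)
qed

lemma H_sys_swap: "H_sys b a d (prod.swap z) = prod.swap (H_sys a b d z)"
  by (cases z) (simp add: H_sys_def)

lemma H_jacobian_det_swap: "H_jacobian_det d b a (prod.swap z) = H_jacobian_det d a b z"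
  by (cases z) (simp add: H_jacobian_det_def algebra_simps)

lemma swap_mem_pos_quadrant_iff: "prod.swap z \<in> pos_quadrant \<longleftrightarrow> z \<in> pos_quadrant"
  by (cases z) (auto simp: pos_quadrant_def)

lemma swap_mem_nondegenerate_positive_roots_iff:
  "prod.swap z \<in> nondegenerate_positive_roots d (prod.swap p) \<longleftrightarrow> z \<in> nondegenerate_positive_roots d p"
proof -
  have "prod.swap w = 0 \<longleftrightarrow> w = 0" for w :: "real \<times> real"
    by (cases w) (auto simp: zero_prod_def)
  then show ?thesis
    using H_sys_swap[of "snd p" "fst p" d z] H_jacobian_det_swap[of d "snd p" "fst p" z]
    by (simp add: nondegenerate_positive_roots_def nondegenerate_root_H_sys_iff swap_mem_pos_quadrant_iff)
qed

lemma swap_mem_E_set: "p \<in> E_set d \<Longrightarrow> prod.swap p \<in> E_set d"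
proof -
  assume "p \<in> E_set d"
  then obtain S where S: "S \<subseteq> nondegenerate_positive_roots d p" "finite S" "5 \<le> card S"
    unfolding E_set_eq by blast
  then have "prod.swap ` S \<subseteq> nondegenerate_positive_roots d (prod.swap p)"
    unfolding image_subset_iff swap_mem_nondegenerate_positive_roots_iff by blast
  moreover have "finite (prod.swap ` S)" "5 \<le> card (prod.swap ` S)"
    using S by (simp_all add: card_image)
  ultimately show "prod.swap p \<in> E_set d"
    unfolding E_set_eq by blast
qed

lemma open_pos_quadrant: "open pos_quadrant"
proof -
  have "pos_quadrant = {0<..} \<times> {0<..}"
    by (auto simp: pos_quadrant_def)
  then show ?thesis
    by (metis open_Times open_greaterThan)
qed

lemma eventually_nondegenerate_positive_root_near:
  assumes "z \<in> nondegenerate_positive_roots d p" "e > 0"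
  shows "\<forall>\<^sub>F q in nhds p. \<exists>x\<in>nondegenerate_positive_roots d q. dist x z < e"
proof -
  obtain a b where p: "p = (a, b)"
    by fastforce
  let ?F = "\<lambda>(p, z). H_sys (fst p) (snd p) d z"
  let ?U = "UNIV \<times> (ball z e \<inter> pos_quadrant) \<inter> {w. H_jacobian_det d (fst (fst w)) (snd (fst w)) (snd w) \<noteq> 0}"
  have "open ?U"
    unfolding H_jacobian_det_def case_prod_beta
    by (intro open_Int open_Times open_ball open_pos_quadrant open_UNIV open_Collect_neq continuous_intros)
  moreover have "continuous_on ?U ?F"
    unfolding H_sys_def case_prod_beta by (intro continuous_intros)
  moreover have "((a, b), z) \<in> ?U" "?F ((a, b), z) = 0"
    using assms by (auto simp: p nondegenerate_positive_roots_def nondegenerate_root_H_sys_iff)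
  moreover have "bij (H_jacobian d a b z)"
    using assms(1)
    by (simp add: p nondegenerate_positive_roots_def nondegenerate_root_H_sys_iff bij_H_jacobian_iff)
  then have "inj (\<lambda>v. (0, 0) + H_jacobian d a b z v)"
    by (simp add: bij_is_inj flip: zero_prod_def)
  ultimately have "\<forall>\<^sub>F q in nhds (a, b). \<exists>x. (q, x) \<in> ?U \<and> ?F (q, x) = 0"
    by (intro eventually_zero_near_nondegenerate_zero[OF _ _ _ _ H_sys_has_joint_derivative]) auto
  then show ?thesis
    unfolding p by (rule eventually_mono)
      (force simp: nondegenerate_positive_roots_def nondegenerate_root_H_sys_iff dist_commute)
qed

theorem proposition1p4:
  fixes d :: nat
  shows "open (E_set d) \<and> (\<forall>a b. (a, b) \<in> E_set d \<longleftrightarrow> (b, a) \<in> E_set d)"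
proof
  show "open (E_set d)"
    unfolding E_set_eq
    by (rule open_Collect_finite_subset_card_ge) (rule eventually_nondegenerate_positive_root_near)
  show "\<forall>a b. (a, b) \<in> E_set d \<longleftrightarrow> (b, a) \<in> E_set d"
    using swap_mem_E_set by fastforce
qed

end
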